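(* Let $X$ be a set with $|X|\ge 4$. Then $S_X$, as a subgroup of itself, is not rack admissible; that is, there is no rack $(X,* )$ with $\mathrm{LMlt}(X,* )=S_X$.
   Context: A rack is a groupoid $(X,* )$ whose left translations $L_x$ ($y\mapsto x*y$) are bijections and which satisfies $x*(y*z)=(x*y)*(x*z)$. $\mathrm{LMlt}(X,* )=\langle L_x:x\in X\rangle\le S_X$, where $S_X$ is the symmetric group on $X$. A subgroup $G\le S_X$ is rack admissible if there is a rack $(X,* )$ with $\mathrm{LMlt}(X,* )=G$. *)

theory Defs
  imports "HOL-Algebra.Bij" "HOL-Algebra.Generated_Groups"
begin

definition rack :: "'a set \<Rightarrow> ('a \<Rightarrow> 'a \<Rightarrow> 'a) \<Rightarrow> bool" where
  "rack X m \<longleftrightarrow>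
     (\<forall>x\<in>X. \<forall>y\<in>X. m x y \<in> X) \<and>
     (\<forall>x\<in>X. bij_betw (m x) X X) \<and>
     (\<forall>x\<in>X. \<forall>y\<in>X. \<forall>z\<in>X. m x (m y z) = m (m x y) (m x z))"

text \<open>Left translation L_x as an element of the symmetric group S_X = BijGroup X
(functions are extensional, i.e. undefined outside X).\<close>
definition Ltrans :: "'a set \<Rightarrow> ('a \<Rightarrow> 'a \<Rightarrow> 'a) \<Rightarrow> 'a \<Rightarrow> ('a \<Rightarrow> 'a)" where
  "Ltrans X m x = restrict (m x) X"

definition LMlt :: "'a set \<Rightarrow> ('a \<Rightarrow> 'a \<Rightarrow> 'a) \<Rightarrow> ('a \<Rightarrow> 'a) set" where
  "LMlt X m = generate (BijGroup X) (Ltrans X m ` X)"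

end

theory Submission
  imports Defs "HOL-Combinatorics.Transposition"
begin

text \<open>Left self-distributivity says exactly that every left translation is an
automorphism of (X, *); as automorphisms form a subgroup of S_X, all of
LMlt(X, *) consists of automorphisms. If LMlt(X, *) = S_X, every transposition
is therefore an automorphism. For x \<noteq> y, a transposition fixing x and y but moving x * y
(possible when |X| \<ge> 4) shows x * y \<in> {x, y}; and x * y = x is impossible,
since swapping y with a third point w would give x * w = x = x * y,
contradicting injectivity of L_x. So x * y = y for all x, y: the rack is
trivial, hence so is LMlt(X, *), whereas S_X is not.\<close>

definition auts :: "'a set \<Rightarrow> ('a \<Rightarrow> 'a \<Rightarrow> 'a) \<Rightarrow> ('a \<Rightarrow> 'a) set" where
  "auts X m = {g \<in> Bij X. \<forall>x\<in>X. \<forall>y\<in>X. g (m x y) = m (g x) (g y)}"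

lemma subgroup_auts:
  assumes closed: "\<And>x y. x \<in> X \<Longrightarrow> y \<in> X \<Longrightarrow> m x y \<in> X"
  shows "subgroup (auts X m) (BijGroup X)"
proof (rule subgroup.intro)
  show "auts X m \<subseteq> carrier (BijGroup X)"
    by (auto simp: auts_def BijGroup_def)
next
  fix g h assume g: "g \<in> auts X m" and h: "h \<in> auts X m"
  then have "g \<in> Bij X" "h \<in> Bij X" by (simp_all add: auts_def)
  then have "compose X g h \<in> Bij X" by (rule compose_Bij)
  moreover have "compose X g h (m x y) = m (compose X g h x) (compose X g h y)"
    if "x \<in> X" "y \<in> X" for x y
  proof -
    have "h x \<in> X" "h y \<in> X"
      using \<open>h \<in> Bij X\<close> that by (auto dest: Bij_imp_funcset)
    with g h that closed show ?thesis by (simp add: auts_def compose_def)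
  qed
  ultimately show "g \<otimes>\<^bsub>BijGroup X\<^esub> h \<in> auts X m"
    using \<open>g \<in> Bij X\<close> \<open>h \<in> Bij X\<close> by (simp add: auts_def BijGroup_def)
next
  show "\<one>\<^bsub>BijGroup X\<^esub> \<in> auts X m"
    by (simp add: auts_def BijGroup_def id_Bij closed)
next
  fix g assume g: "g \<in> auts X m"
  then have "g \<in> Bij X" by (simp add: auts_def)
  moreover have "m \<in> X \<rightarrow> X \<rightarrow> X" using closed by blast
  ultimately show "inv\<^bsub>BijGroup X\<^esub> g \<in> auts X m"
    using g by (simp add: auts_def inv_BijGroup restrict_inv_into_Bij
        Bij_inv_into_lemma closed)
qed

lemma Ltrans_in_auts:
  assumes "rack X m" and "z \<in> X"
  shows "Ltrans X m z \<in> auts X m"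
proof -
  have "bij_betw (m z) X X" using assms by (simp add: rack_def)
  then have "Ltrans X m z \<in> Bij X" by (simp add: Ltrans_def Bij_def)
  moreover have "Ltrans X m z (m x y) = m (Ltrans X m z x) (Ltrans X m z y)"
    if "x \<in> X" "y \<in> X" for x y
  proof -
    have "m x y \<in> X" "m z (m x y) = m (m z x) (m z y)"
      using assms that unfolding rack_def by blast+
    with that show ?thesis by (simp add: Ltrans_def)
  qed
  ultimately show ?thesis by (simp add: auts_def)
qed

lemma LMlt_subset_auts:
  assumes "rack X m"
  shows "LMlt X m \<subseteq> auts X m"
  unfolding LMlt_def
proof (rule group.generate_subgroup_incl[OF group_BijGroup])
  show "Ltrans X m ` X \<subseteq> auts X m" using Ltrans_in_auts[OF assms] by blast
  show "subgroup (auts X m) (BijGroup X)"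
    using assms by (intro subgroup_auts) (simp add: rack_def)
qed

lemma restrict_transpose_in_Bij:
  assumes "a \<in> X" and "b \<in> X"
  shows "restrict (transpose a b) X \<in> Bij X"
  using assms by (simp add: Bij_def)

lemma transpose_op_if_all_Bij_auts:
  assumes "Bij X \<subseteq> auts X m" and "a \<in> X" "b \<in> X" "u \<in> X" "v \<in> X" "m u v \<in> X"
  shows "transpose a b (m u v) = m (transpose a b u) (transpose a b v)"
proof -
  have "restrict (transpose a b) X \<in> auts X m"
    using assms(1) restrict_transpose_in_Bij[OF assms(2,3)] by blast
  then have "restrict (transpose a b) X (m u v)
      = m (restrict (transpose a b) X u) (restrict (transpose a b) X v)"
    using assms(4,5) unfolding auts_def by blast
  with assms(4-6) show ?thesis by simp
qed

lemma ex_in_diff_finite: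
  assumes "finite F" and "infinite X \<or> card F < card X"
  shows "\<exists>w\<in>X. w \<notin> F"
proof (rule ccontr)
  assume "\<not> ?thesis"
  then have "X \<subseteq> F" by blast
  then have "finite X" "card X \<le> card F"
    using assms(1) by (auto intro: finite_subset card_mono)
  with assms(2) show False by simp
qed

lemma ex_in_diff_three:
  assumes "infinite X \<or> card X \<ge> 4"
  shows "\<exists>w\<in>X. w \<notin> {a, b, c}"
proof (rule ex_in_diff_finite)
  have "card {a, b, c} \<le> 3" by (simp add: card_insert_if)
  then show "infinite X \<or> card {a, b, c} < card X" using assms by linarith
qed simp

lemma op_in_pair_if_all_Bij_auts:
  assumes "\<And>x y. x \<in> X \<Longrightarrow> y \<in> X \<Longrightarrow> m x y \<in> X"
    and "Bij X \<subseteq> auts X m" and big: "infinite X \<or> card X \<ge> 4"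
    and "x \<in> X" "y \<in> X"
  shows "m x y \<in> {x, y}"
proof (rule ccontr)
  define z where "z = m x y"
  assume "m x y \<notin> {x, y}"
  then have "x \<noteq> z" "y \<noteq> z" by (auto simp: z_def)
  obtain w where w: "w \<in> X" "x \<noteq> w" "y \<noteq> w" "z \<noteq> w"
    using ex_in_diff_three[OF big] by blast
  have "transpose z w (m x y) = m (transpose z w x) (transpose z w y)"
    using assms w by (intro transpose_op_if_all_Bij_auts) (auto simp: z_def)
  then have "w = z" using \<open>x \<noteq> z\<close> \<open>y \<noteq> z\<close> w by (simp add: z_def[symmetric])
  with w show False by simp
qed

lemma op_ne_left_if_all_Bij_auts:
  assumes "\<And>x y. x \<in> X \<Longrightarrow> y \<in> X \<Longrightarrow> m x y \<in> X"
    and inj: "inj_on (m x) X"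
    and "Bij X \<subseteq> auts X m" and big: "infinite X \<or> card X \<ge> 4"
    and "x \<in> X" "y \<in> X" "x \<noteq> y"
  shows "m x y \<noteq> x"
proof
  assume mxy: "m x y = x"
  obtain w where w: "w \<in> X" "x \<noteq> w" "y \<noteq> w"
    using ex_in_diff_three[OF big] by blast
  have "transpose y w (m x y) = m (transpose y w x) (transpose y w y)"
    using assms w by (intro transpose_op_if_all_Bij_auts) auto
  then have "m x w = m x y" using mxy w \<open>x \<noteq> y\<close> by simp
  with inj w \<open>y \<in> X\<close> show False by (auto dest: inj_onD)
qed

lemma rack_trivial_if_all_Bij_auts:
  assumes rack: "rack X m"
    and auts: "Bij X \<subseteq> auts X m" and big: "infinite X \<or> card X \<ge> 4"
    and x: "x \<in> X" and y: "y \<in> X"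
  shows "m x y = y"
proof -
  have closed: "\<And>x y. x \<in> X \<Longrightarrow> y \<in> X \<Longrightarrow> m x y \<in> X"
    and inj: "\<And>x. x \<in> X \<Longrightarrow> inj_on (m x) X"
    using rack by (auto simp: rack_def bij_betw_def)
  have off_diagonal: "m u v = v" if "u \<in> X" "v \<in> X" "u \<noteq> v" for u v
    using op_in_pair_if_all_Bij_auts[OF closed auts big that(1,2)]
      op_ne_left_if_all_Bij_auts[OF closed inj[OF that(1)] auts big that] by blast
  show ?thesis
  proof (cases "x = y")
    case True
    have "m x x = x"
    proof (rule ccontr)
      assume ne: "m x x \<noteq> x"
      have xx: "m x x \<in> X" using closed[OF x x] .
      then have "m x (m x x) = m x x" using off_diagonal[OF x xx] ne by simp
      then have "m x x = x" using inj_onD[OF inj[OF x] _ xx x] by simp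
      with ne show False ..
    qed
    with True show ?thesis by simp
  qed (use off_diagonal x y in blast)
qed

lemma LMlt_trivial:
  assumes "\<forall>x\<in>X. \<forall>y\<in>X. m x y = y"
  shows "LMlt X m = {\<one>\<^bsub>BijGroup X\<^esub>}"
proof
  interpret group "BijGroup X" by (rule group_BijGroup)
  have "Ltrans X m ` X \<subseteq> {\<one>\<^bsub>BijGroup X\<^esub>}"
    using assms by (auto simp: Ltrans_def BijGroup_def)
  then show "LMlt X m \<subseteq> {\<one>\<^bsub>BijGroup X\<^esub>}"
    unfolding LMlt_def by (intro generate_subgroup_incl triv_subgroup)
  show "{\<one>\<^bsub>BijGroup X\<^esub>} \<subseteq> LMlt X m"
    by (simp add: LMlt_def generate.one)
qed

lemma BijGroup_nontrivial:
  assumes "a \<in> X" "b \<in> X" "a \<noteq> b"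
  shows "carrier (BijGroup X) \<noteq> {\<one>\<^bsub>BijGroup X\<^esub>}"
proof
  assume trivial: "carrier (BijGroup X) = {\<one>\<^bsub>BijGroup X\<^esub>}"
  have "restrict (transpose a b) X \<in> carrier (BijGroup X)"
    using restrict_transpose_in_Bij[OF assms(1,2)] by (simp add: BijGroup_def)
  with trivial have "restrict (transpose a b) X a = \<one>\<^bsub>BijGroup X\<^esub> a" by simp
  with assms show False by (simp add: BijGroup_def)
qed

theorem corollary3p8:
  fixes X :: "'a set"
  assumes "infinite X \<or> card X \<ge> 4"
  shows "\<not> (\<exists>m. rack X m \<and> LMlt X m = carrier (BijGroup X))"
proof
  assume "\<exists>m. rack X m \<and> LMlt X m = carrier (BijGroup X)"
  then obtain m where rack: "rack X m" and full: "LMlt X m = carrier (BijGroup X)"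
    by blast
  have "Bij X \<subseteq> auts X m"
    using LMlt_subset_auts[OF rack] full by (simp add: BijGroup_def)
  then have "\<forall>x\<in>X. \<forall>y\<in>X. m x y = y"
    using rack_trivial_if_all_Bij_auts[OF rack _ assms] by blast
  then have "carrier (BijGroup X) = {\<one>\<^bsub>BijGroup X\<^esub>}"
    using LMlt_trivial full by metis
  moreover obtain a where "a \<in> X" using ex_in_diff_three[OF assms] by blast
  moreover obtain b where "b \<in> X" "a \<noteq> b"
    using ex_in_diff_three[OF assms, of a a a] by blast
  ultimately show False by (simp add: BijGroup_nontrivial)
qed

end
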